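(* Fix a threshold $R\in(0,1)$ and, when $\Delta_S^B\neq 0$, let $\tilde i=\Delta_O^B/\Delta_S^B$. Then: (i) if $|\Delta_S^B|\le 2\Delta_O^B$, every type $i\in[-1/2,1/2]$ accepts the recommendation; (ii) if $\Delta_S^B<-2\Delta_O^B$, every type $i\ge\tilde i$ accepts the recommendation; (iii) if $\Delta_S^B>2\Delta_O^B$, every type $i\le\tilde i$ accepts the recommendation.
   Context: Setting. Consumer types are $i\in[-1/2,1/2]$, distributed according to a continuous cumulative distribution function $F$ with full support on $[-1/2,1/2]$. A product has a quality vector $(Q_1,Q_2)\in\{0,1\}^2$; a type-$i$ consumer gets payoff $(1/2+i)Q_1+(1/2-i)Q_2$ from it. The versions $(1,1),(1,0),(0,1),(0,0)$ have prior probabilities $q_H,q_1,q_2,q_L$ respectively, all strictly positive and summing to $1$. One product carries a recommendation from a sender whose type is drawn from $F$ independently of the product; given a threshold $R\in(0,1)$, the sender gives a buy recommendation $B$ if her payoff from the product is at least $R$ and a don't-buy recommendation $D$ otherwise. Let $\phi_1(R)=1-F(R-1/2)$, $\phi_2(R)=F(1/2-R)$, $\pi^B=q_H+q_1\phi_1(R)+q_2\phi_2(R)$ and $\pi^D=1-\pi^B$. Posteriors: $p^B_H=q_H/\pi^B$, $p^B_1=q_1\phi_1(R)/\pi^B$, $p^B_2=q_2\phi_2(R)/\pi^B$, $p^B_L=0$; $p^D_H=0$, $p^D_1=q_1(1-\phi_1(R))/\pi^D$, $p^D_2=q_2(1-\phi_2(R))/\pi^D$, $p^D_L=q_L/\pi^D$.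 For $r\in\{B,D\}$ let $U_i^r=p_H^r+(1/2+i)p_1^r+(1/2-i)p_2^r$ and $U_i^0=q_H+(1/2+i)q_1+(1/2-i)q_2$. A receiver of type $i$ accepts the recommendation if $U_i^B\ge U_i^0$ (equivalently, $U_i^0\ge U_i^D$). The objective and subjective effects of $r\in\{B,D\}$ are $\Delta_O^r=p_H^r-q_H+\frac{p_1^r-q_1}{2}+\frac{p_2^r-q_2}{2}$ and $\Delta_S^r=(p_2^r-q_2)-(p_1^r-q_1)$. *)

theory Defs
  imports Complex_Main
begin

definition is_cdf_full_support :: "(real \<Rightarrow> real) \<Rightarrow> bool" where
  "is_cdf_full_support F \<longleftrightarrow> continuous_on UNIV F \<and> mono F \<and>
     (\<forall>x. x \<le> -1/2 \<longrightarrow> F x = 0) \<and> (\<forall>x. x \<ge> 1/2 \<longrightarrow> F x = 1) \<and>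
     strict_mono_on {-1/2..1/2} F"

definition phi1 :: "(real \<Rightarrow> real) \<Rightarrow> real \<Rightarrow> real" where
  "phi1 F R = 1 - F (R - 1/2)"

definition phi2 :: "(real \<Rightarrow> real) \<Rightarrow> real \<Rightarrow> real" where
  "phi2 F R = F (1/2 - R)"

definition piB :: "(real \<Rightarrow> real) \<Rightarrow> real \<Rightarrow> real \<Rightarrow> real \<Rightarrow> real \<Rightarrow> real" where
  "piB F qH q1 q2 R = qH + q1 * phi1 F R + q2 * phi2 F R"

text \<open>Posteriors after a buy recommendation (p^B_L = 0).\<close>
definition pBH :: "(real \<Rightarrow> real) \<Rightarrow> real \<Rightarrow> real \<Rightarrow> real \<Rightarrow> real \<Rightarrow> real" where
  "pBH F qH q1 q2 R = qH / piB F qH q1 q2 R"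
definition pB1 :: "(real \<Rightarrow> real) \<Rightarrow> real \<Rightarrow> real \<Rightarrow> real \<Rightarrow> real \<Rightarrow> real" where
  "pB1 F qH q1 q2 R = q1 * phi1 F R / piB F qH q1 q2 R"
definition pB2 :: "(real \<Rightarrow> real) \<Rightarrow> real \<Rightarrow> real \<Rightarrow> real \<Rightarrow> real \<Rightarrow> real" where
  "pB2 F qH q1 q2 R = q2 * phi2 F R / piB F qH q1 q2 R"

definition UB :: "(real \<Rightarrow> real) \<Rightarrow> real \<Rightarrow> real \<Rightarrow> real \<Rightarrow> real \<Rightarrow> real \<Rightarrow> real" where
  "UB F qH q1 q2 R i = pBH F qH q1 q2 R + (1/2 + i) * pB1 F qH q1 q2 R
                       + (1/2 - i) * pB2 F qH q1 q2 R"

definition U0 :: "real \<Rightarrow> real \<Rightarrow> real \<Rightarrow> real \<Rightarrow> real" where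
  "U0 qH q1 q2 i = qH + (1/2 + i) * q1 + (1/2 - i) * q2"

definition accepts :: "(real \<Rightarrow> real) \<Rightarrow> real \<Rightarrow> real \<Rightarrow> real \<Rightarrow> real \<Rightarrow> real \<Rightarrow> bool" where
  "accepts F qH q1 q2 R i \<longleftrightarrow> UB F qH q1 q2 R i \<ge> U0 qH q1 q2 i"

definition DeltaOB :: "(real \<Rightarrow> real) \<Rightarrow> real \<Rightarrow> real \<Rightarrow> real \<Rightarrow> real \<Rightarrow> real" where
  "DeltaOB F qH q1 q2 R = pBH F qH q1 q2 R - qH + (pB1 F qH q1 q2 R - q1) / 2
                          + (pB2 F qH q1 q2 R - q2) / 2"

definition DeltaSB :: "(real \<Rightarrow> real) \<Rightarrow> real \<Rightarrow> real \<Rightarrow> real \<Rightarrow> real \<Rightarrow> real" where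
  "DeltaSB F qH q1 q2 R = (pB2 F qH q1 q2 R - q2) - (pB1 F qH q1 q2 R - q1)"

end

theory Submission
  imports Defs
begin

text \<open>
  A type-\<open>i\<close> receiver gains \<open>\<Delta>\<^sub>O\<^sup>B - i \<Delta>\<^sub>S\<^sup>B\<close> from following a buy
  recommendation, an affine function of \<open>i\<close>. Moreover \<open>\<Delta>\<^sub>O\<^sup>B \<ge> 0\<close>: the buy
  probabilities \<open>1, \<phi>\<^sub>1, \<phi>\<^sub>2, 0\<close> of the versions are ordered like their objective
  values \<open>1, 1/2, 1/2, 0\<close>, so conditioning on \<open>B\<close> cannot lower the expected objective value.
  The three cases then only locate the zero \<open>\<Delta>\<^sub>O\<^sup>B / \<Delta>\<^sub>S\<^sup>B\<close> of the gain relative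
  to \<open>[-1/2, 1/2]\<close>.
\<close>

lemma cdf_full_support_range:
  assumes "is_cdf_full_support F"
  shows "0 \<le> F x" and "F x \<le> 1"
proof -
  have "mono F" and "F (min x (-1)) = 0" and "F (max x 1) = 1"
    using assms unfolding is_cdf_full_support_def by auto
  moreover have "F (min x (-1)) \<le> F x" and "F x \<le> F (max x 1)"
    using \<open>mono F\<close> by (simp_all add: monoD)
  ultimately show "0 \<le> F x" and "F x \<le> 1" by simp_all
qed

text \<open>
  Here \<open>s\<close> is the mass \<open>q\<^sub>1\<phi>\<^sub>1 + q\<^sub>2\<phi>\<^sub>2\<close> of the middle versions \<open>m = q\<^sub>1 + q\<^sub>2\<close>
  that is recommended. The slack is affine in \<open>s\<close>, equal to \<open>q\<^sub>H(q\<^sub>L + m/2)\<close>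
  at \<open>s = 0\<close> and to \<open>(q\<^sub>H + m/2) q\<^sub>L\<close> at \<open>s = m\<close>.
\<close>
lemma buy_mass_objective_value_le:
  fixes qH qL m s :: real
  assumes "0 \<le> qH" "0 \<le> qL" "0 \<le> s" "s \<le> m" "qH + m + qL = 1"
  shows "(qH + s) * (qH + m / 2) \<le> qH + s / 2"
proof (cases "m = 0")
  case True
  then show ?thesis using assms by (simp add: mult_left_le)
next
  case False
  then have "m > 0" using assms by linarith
  have "qL = 1 - qH - m" using assms(5) by simp
  have "m * (qH + s / 2 - (qH + s) * (qH + m / 2))
      = (m - s) * (qH * (qL + m / 2)) + s * ((qH + m / 2) * qL)"
    unfolding \<open>qL = 1 - qH - m\<close> by (simp add: field_simps)
  also have "\<dots> \<ge> 0" using assms by simp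
  finally show ?thesis using \<open>m > 0\<close> by (simp add: zero_le_mult_iff)
qed

lemma DeltaOB_eq:
  "DeltaOB F qH q1 q2 R
     = (qH + (q1 * phi1 F R + q2 * phi2 F R) / 2) / piB F qH q1 q2 R - (qH + q1 / 2 + q2 / 2)"
  unfolding DeltaOB_def pBH_def pB1_def pB2_def
  by (cases "piB F qH q1 q2 R = 0") (simp_all add: field_simps)

lemma DeltaOB_nonneg:
  assumes "is_cdf_full_support F"
    and "0 < qH" "0 \<le> q1" "0 \<le> q2" "0 \<le> qL" "qH + q1 + q2 + qL = 1"
  shows "0 \<le> DeltaOB F qH q1 q2 R"
proof -
  define s where "s = q1 * phi1 F R + q2 * phi2 F R"
  have phi_range: "0 \<le> phi1 F R" "phi1 F R \<le> 1" "0 \<le> phi2 F R" "phi2 F R \<le> 1"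
    unfolding phi1_def phi2_def using cdf_full_support_range[OF assms(1)] by auto
  have "0 \<le> s" unfolding s_def using phi_range assms by simp
  moreover have "s \<le> q1 + q2"
    unfolding s_def using phi_range assms by (simp add: add_mono mult_left_le)
  ultimately have "(qH + s) * (qH + (q1 + q2) / 2) \<le> qH + s / 2"
    using assms by (intro buy_mass_objective_value_le[where qL = qL]) auto
  moreover have "qH + s > 0" using \<open>0 \<le> s\<close> assms(2) by simp
  ultimately have "qH + q1 / 2 + q2 / 2 \<le> (qH + s / 2) / (qH + s)"
    by (simp add: pos_le_divide_eq mult.commute add.assoc) (simp add: add_divide_distrib)
  then show ?thesis by (simp add: DeltaOB_eq piB_def s_def add.assoc)
qed

lemma UB_minus_U0:
  "UB F qH q1 q2 R i - U0 qH q1 q2 i = DeltaOB F qH q1 q2 R - i * DeltaSB F qH q1 q2 R"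
  unfolding UB_def U0_def DeltaOB_def DeltaSB_def by (simp add: field_simps)

lemma accepts_iff: "accepts F qH q1 q2 R i \<longleftrightarrow> i * DeltaSB F qH q1 q2 R \<le> DeltaOB F qH q1 q2 R"
  using UB_minus_U0[of F qH q1 q2 R i] unfolding accepts_def by linarith

theorem corollary1:
  fixes F :: "real \<Rightarrow> real" and qH q1 q2 qL R :: real
  assumes "is_cdf_full_support F"
    and "qH > 0" and "q1 > 0" and "q2 > 0" and "qL > 0" and "qH + q1 + q2 + qL = 1"
    and "0 < R" and "R < 1"
  defines "dO \<equiv> DeltaOB F qH q1 q2 R" and "dS \<equiv> DeltaSB F qH q1 q2 R"
  shows "(\<bar>dS\<bar> \<le> 2 * dO \<longrightarrow> (\<forall>i\<in>{-1/2..1/2}. accepts F qH q1 q2 R i))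
       \<and> (dS \<noteq> 0 \<and> dS < - 2 * dO \<longrightarrow>
            (\<forall>i\<in>{-1/2..1/2}. i \<ge> dO / dS \<longrightarrow> accepts F qH q1 q2 R i))
       \<and> (dS \<noteq> 0 \<and> dS > 2 * dO \<longrightarrow>
            (\<forall>i\<in>{-1/2..1/2}. i \<le> dO / dS \<longrightarrow> accepts F qH q1 q2 R i))"
proof -
  have "0 \<le> dO" unfolding dO_def using assms(1-6) by (intro DeltaOB_nonneg) auto
  have "i * dS \<le> dO" if "\<bar>dS\<bar> \<le> 2 * dO" "i \<in> {-1/2..1/2}" for i
  proof -
    have "i * dS \<le> \<bar>i\<bar> * \<bar>dS\<bar>" by (simp flip: abs_mult)
    also have "\<dots> \<le> 1/2 * \<bar>dS\<bar>" using that(2) by (intro mult_right_mono) auto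
    finally show ?thesis using that(1) by linarith
  qed
  moreover have "i * dS \<le> dO" if "dS < - 2 * dO" "dO / dS \<le> i" for i
    using that \<open>0 \<le> dO\<close> by (simp add: neg_divide_le_eq)
  moreover have "i * dS \<le> dO" if "dS > 2 * dO" "i \<le> dO / dS" for i
    using that \<open>0 \<le> dO\<close> by (simp add: pos_le_divide_eq)
  ultimately show ?thesis unfolding accepts_iff dO_def[symmetric] dS_def[symmetric] by auto
qed

end
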